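(* Let $\mu\in\Delta([N])$, let $(U,\pi)\sim\mathrm{Unif}([0,1])\times\mathrm{Unif}(\Pi)$, and let $Y = \Gamma((U,\pi),\mu)$. Then almost surely $$\frac{1}{C_0}\,\mathrm{Cov}\big(U,\eta(\pi(Y))\mid Y\big) = 1-\mu(Y).$$
   Context: $\Pi$ is the set of permutations of $[N]$ and $\mathrm{Unif}(\Pi)$ the uniform distribution on it (independent of $U$). Decoder: $\Gamma((u,\pi),\mu):=\pi^{-1}(\min\{\pi(i):\mu(\{j:\pi(j)\le\pi(i)\})\ge u\})$. $\eta(i):=(i-1)/(N-1)$ and $C_0:=\mathrm{Var}(\eta(I))$ for $I$ uniform on $[N]$. *)

theory Defs
  imports "HOL-Probability.Probability"
begin

definition perms :: "nat \<Rightarrow> (nat \<Rightarrow> nat) set" where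
  "perms N = {p. p permutes {1..N}}"

definition is_distribution :: "nat \<Rightarrow> (nat \<Rightarrow> real) \<Rightarrow> bool" where
  "is_distribution N mu \<longleftrightarrow> (\<forall>i\<in>{1..N}. mu i \<ge> 0) \<and> (\<Sum>i\<in>{1..N}. mu i) = 1"

definition Gamma :: "nat \<Rightarrow> real \<times> (nat \<Rightarrow> nat) \<Rightarrow> (nat \<Rightarrow> real) \<Rightarrow> nat" where
  "Gamma N up mu =
     (let u = fst up; p = snd up in
      inv_into {1..N} p
        (Min {p i | i. i \<in> {1..N} \<and> (\<Sum>j\<in>{j\<in>{1..N}. p j \<le> p i}. mu j) \<ge> u}))"

definition eta :: "nat \<Rightarrow> nat \<Rightarrow> real" where
  "eta N i = (real i - 1) / (real N - 1)"

definition C0 :: "nat \<Rightarrow> real" where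
  "C0 N = measure_pmf.variance (pmf_of_set {1..N}) (\<lambda>i. eta N i)"

definition UPi :: "nat \<Rightarrow> (real \<times> (nat \<Rightarrow> nat)) measure" where
  "UPi N = uniform_measure lborel {0..1} \<Otimes>\<^sub>M measure_pmf (pmf_of_set (perms N))"

definition cond_exp_event :: "'a measure \<Rightarrow> 'a set \<Rightarrow> ('a \<Rightarrow> real) \<Rightarrow> real" where
  "cond_exp_event M A f = (\<integral>w. indicator A w * f w \<partial>M) / measure M A"

text \<open>Conditional covariance Cov(X, Z | Y) evaluated at the value y of the discrete
  random variable Y, i.e. the covariance under the conditional law given {Y = y}.\<close>
definition cond_cov :: "'a measure \<Rightarrow> ('a \<Rightarrow> real) \<Rightarrow> ('a \<Rightarrow> real) \<Rightarrow> ('a \<Rightarrow> 'b) \<Rightarrow> 'b \<Rightarrow> real" where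
  "cond_cov M X Z Y y =
     (let A = {w \<in> space M. Y w = y} in
      cond_exp_event M A (\<lambda>w. X w * Z w) - cond_exp_event M A X * cond_exp_event M A Z)"

end

theory Submission
  imports Defs
begin

text \<open>Write \<open>a\<^sub>p\<close> for the \<open>\<mu>\<close>-mass of the points that the permutation \<open>p\<close> ranks before \<open>y\<close>.
  Given \<open>\<pi> = p\<close>, the decoder returns \<open>y\<close> exactly when \<open>U \<in> (a\<^sub>p, a\<^sub>p + \<mu> y]\<close>. This event has
  probability \<open>\<mu> y\<close> whatever \<open>p\<close> is, so given \<open>Y = y\<close> the permutation is still uniform and \<open>U\<close> is
  \<open>a\<^sub>\<pi>\<close> plus an independent uniform shift; hence the conditional covariance is
  \<open>Cov(a\<^sub>\<pi>, \<eta>(\<pi> y))\<close>. Given \<open>\<pi> y = k\<close>, every other point lies below \<open>y\<close> with probability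
  \<open>\<eta> k\<close>, so \<open>E[a\<^sub>\<pi> | \<pi> y] = (1 - \<mu> y) \<eta>(\<pi> y)\<close> and the covariance is
  \<open>(1 - \<mu> y) Var(\<eta>(\<pi> y)) = (1 - \<mu> y) C\<^sub>0\<close>. Almost surely \<open>U\<close> avoids the finitely many partial
  sums of \<open>\<mu>\<close>, which forces \<open>\<mu> Y > 0\<close>.\<close>

lemma Min_threshold_eq_iff:
  fixes G :: "nat \<Rightarrow> 'a::linorder"
  assumes "mono G" and "G 0 < u" and "u \<le> G n" and k: "k \<in> {1..n}"
  shows "Min {i\<in>{1..n}. u \<le> G i} = k \<longleftrightarrow> G (k - 1) < u \<and> u \<le> G k"
proof
  let ?K = "{i\<in>{1..n}. u \<le> G i}"
  have fin: "finite ?K" by simp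
  assume min: "Min ?K = k"
  have "n \<in> ?K" using assms(3) k by simp
  then have "k \<in> ?K" using Min_in[OF fin] min by blast
  moreover have "G (k - 1) < u"
  proof (cases "k = 1")
    case False
    have "k - 1 \<notin> ?K"
    proof
      assume "k - 1 \<in> ?K"
      then have "k \<le> k - 1" using min Min_le[OF fin] by metis
      then show False using False k by arith
    qed
    then show ?thesis using False k by auto
  qed (use assms(2) in simp)
  ultimately show "G (k - 1) < u \<and> u \<le> G k" by simp
next
  assume bounds: "G (k - 1) < u \<and> u \<le> G k"
  have "k \<le> i" if "u \<le> G i" for i
  proof (rule ccontr)
    assume "\<not> k \<le> i"
    then have "G i \<le> G (k - 1)" using \<open>mono G\<close> by (simp add: monoD)
    then show False using bounds that by (meson leD order.trans)
  qed
  then show "Min {i\<in>{1..n}. u \<le> G i} = k"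
    using bounds k by (intro Min_eqI) auto
qed

definition cum_mass :: "nat \<Rightarrow> (nat \<Rightarrow> real) \<Rightarrow> (nat \<Rightarrow> nat) \<Rightarrow> nat \<Rightarrow> real" where
  "cum_mass N mu p k = (\<Sum>j\<in>{j\<in>{1..N}. p j \<le> k}. mu j)"

lemma mono_cum_mass:
  assumes "is_distribution N mu"
  shows "mono (cum_mass N mu p)"
  using assms unfolding cum_mass_def is_distribution_def
  by (intro monoI sum_mono2) auto

lemma cum_mass_0:
  assumes "p permutes {1..N}"
  shows "cum_mass N mu p 0 = 0"
proof -
  have "p j \<noteq> 0" if "j \<in> {1..N}" for j
    using permutes_in_image[OF assms, of j] that by simp
  then have empty: "{j\<in>{1..N}. p j \<le> 0} = {}" by blast
  show ?thesis unfolding cum_mass_def empty by simp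
qed

lemma cum_mass_N:
  assumes "p permutes {1..N}" and "is_distribution N mu"
  shows "cum_mass N mu p N = 1"
proof -
  have "p j \<le> N" if "j \<in> {1..N}" for j
    using permutes_in_image[OF assms(1)] that by fastforce
  then have "{j\<in>{1..N}. p j \<le> N} = {1..N}" by blast
  then show ?thesis using assms(2) unfolding cum_mass_def is_distribution_def by simp
qed

lemma cum_mass_bounds:
  assumes p: "p permutes {1..N}" and mu: "is_distribution N mu" and k: "k \<le> N"
  shows "0 \<le> cum_mass N mu p k" "cum_mass N mu p k \<le> 1"
  using monoD[OF mono_cum_mass[OF mu, of p], of 0 k] monoD[OF mono_cum_mass[OF mu, of p] k]
  by (simp_all add: cum_mass_0[OF p] cum_mass_N[OF p mu])

lemma cum_mass_step:
  assumes "p permutes {1..N}" and "y \<in> {1..N}"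
  shows "cum_mass N mu p (p y) = cum_mass N mu p (p y - 1) + mu y"
proof -
  have "p j = p y \<longleftrightarrow> j = y" if "j \<in> {1..N}" for j
    using permutes_inj_on[OF assms(1)] assms(2) that by (auto dest: inj_onD)
  moreover have "p y \<noteq> 0" using permutes_in_image[OF assms(1), of y] assms(2) by simp
  ultimately have "{j\<in>{1..N}. p j \<le> p y} = insert y {j\<in>{1..N}. p j \<le> p y - 1}"
    and "y \<notin> {j\<in>{1..N}. p j \<le> p y - 1}"
    using assms(2) by fastforce+
  then show ?thesis unfolding cum_mass_def by simp
qed

lemma cum_mass_pred_eq_sum:
  assumes p: "p permutes {1..N}" and y: "y \<in> {1..N}"
  shows "cum_mass N mu p (p y - 1) = (\<Sum>j\<in>{1..N} - {y}. mu j * of_bool (p j < p y))"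
proof -
  have "p y \<noteq> 0" using permutes_in_image[OF p, of y] y by simp
  then have below: "{j\<in>{1..N}. p j \<le> p y - 1} = {j\<in>{1..N} - {y}. p j < p y}"
    by auto
  have "cum_mass N mu p (p y - 1) = (\<Sum>j\<in>{1..N} - {y}. if p j < p y then mu j else 0)"
    unfolding cum_mass_def below by (rule sum.inter_filter) simp
  also have "\<dots> = (\<Sum>j\<in>{1..N} - {y}. mu j * of_bool (p j < p y))"
    by (intro sum.cong) auto
  finally show ?thesis .
qed

lemma Gamma_eq_image:
  "Gamma N (u, p) mu = inv_into {1..N} p (Min (p ` {i\<in>{1..N}. u \<le> cum_mass N mu p (p i)}))"
proof -
  have "{p i |i. i \<in> {1..N} \<and> u \<le> cum_mass N mu p (p i)} = p ` {i\<in>{1..N}. u \<le> cum_mass N mu p (p i)}"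
    by blast
  then show ?thesis unfolding Gamma_def Let_def fst_conv snd_conv cum_mass_def[symmetric] by simp
qed

lemma Gamma_perm:
  assumes "p permutes {1..N}"
  shows "Gamma N (u, p) mu = inv_into {1..N} p (Min {k\<in>{1..N}. u \<le> cum_mass N mu p k})"
proof -
  have "p ` {i\<in>{1..N}. u \<le> cum_mass N mu p (p i)} = {k \<in> p ` {1..N}. u \<le> cum_mass N mu p k}"
    by blast
  then show ?thesis unfolding Gamma_eq_image permutes_image[OF assms] by simp
qed

lemma Min_cum_mass_in:
  assumes p: "p permutes {1..N}" and mu: "is_distribution N mu" and u: "u \<le> 1"
  shows "Min {k\<in>{1..N}. u \<le> cum_mass N mu p k} \<in> {1..N}"
proof -
  have "N \<noteq> 0" using mu by (cases "N = 0") (auto simp: is_distribution_def)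
  then have "N \<in> {k\<in>{1..N}. u \<le> cum_mass N mu p k}"
    using u cum_mass_N[OF p mu] by simp
  then show ?thesis using Min_in[of "{k\<in>{1..N}. u \<le> cum_mass N mu p k}"] by fastforce
qed

lemma Gamma_in_atLeastAtMost:
  assumes "p permutes {1..N}" and "is_distribution N mu" and "u \<le> 1"
  shows "Gamma N (u, p) mu \<in> {1..N}"
  unfolding Gamma_perm[OF assms(1)]
  using Min_cum_mass_in[OF assms] permutes_image[OF assms(1)] by (metis inv_into_into)

lemma Gamma_eq_iff:
  assumes p: "p permutes {1..N}" and mu: "is_distribution N mu"
    and u: "0 < u" "u \<le> 1" and y: "y \<in> {1..N}"
  shows "Gamma N (u, p) mu = y \<longleftrightarrow>
           cum_mass N mu p (p y - 1) < u \<and> u \<le> cum_mass N mu p (p y - 1) + mu y"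
proof -
  let ?k = "Min {k\<in>{1..N}. u \<le> cum_mass N mu p k}"
  have "?k \<in> p ` {1..N}"
    using Min_cum_mass_in[OF p mu u(2)] permutes_image[OF p] by simp
  then have "inv_into {1..N} p ?k = y \<longleftrightarrow> ?k = p y"
    using f_inv_into_f[of ?k p "{1..N}"] inv_into_f_f[OF permutes_inj_on[OF p] y] by auto
  then have "Gamma N (u, p) mu = y \<longleftrightarrow> ?k = p y"
    unfolding Gamma_perm[OF p] .
  also have "\<dots> \<longleftrightarrow> cum_mass N mu p (p y - 1) < u \<and> u \<le> cum_mass N mu p (p y)"
    using cum_mass_0[OF p] cum_mass_N[OF p mu] u permutes_in_image[OF p] y
    by (intro Min_threshold_eq_iff mono_cum_mass[OF mu]) auto
  finally show ?thesis unfolding cum_mass_step[OF p y] .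
qed

lemma mass_Gamma_pos:
  assumes p: "p permutes {1..N}" and mu: "is_distribution N mu"
    and u: "0 < u" "u \<le> 1" "u \<notin> sum mu ` Pow {1..N}"
  shows "mu (Gamma N (u, p) mu) > 0"
proof -
  define y where "y = Gamma N (u, p) mu"
  have y: "y \<in> {1..N}" unfolding y_def using Gamma_in_atLeastAtMost[OF p mu u(2)] .
  then have "cum_mass N mu p (p y - 1) < u" "u \<le> cum_mass N mu p (p y - 1) + mu y"
    using Gamma_eq_iff[OF p mu u(1,2) y] by (simp_all add: y_def)
  moreover have "cum_mass N mu p (p y - 1) + mu y \<in> sum mu ` Pow {1..N}"
    unfolding cum_mass_step[OF p y, symmetric] unfolding cum_mass_def by blast
  ultimately show ?thesis unfolding y_def[symmetric] using u(3) by fastforce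
qed

lemma Gamma_cong:
  assumes "\<And>i. i \<in> {1..N} \<Longrightarrow> p i = q i"
  shows "Gamma N (u, p) mu = Gamma N (u, q) mu"
proof -
  have "cum_mass N mu p = cum_mass N mu q"
    unfolding cum_mass_def using assms by (intro ext arg_cong[where f="sum mu"]) auto
  then have S: "{i\<in>{1..N}. u \<le> cum_mass N mu p (p i)} = {i\<in>{1..N}. u \<le> cum_mass N mu q (q i)}"
    using assms by auto
  have image: "p ` {i\<in>{1..N}. u \<le> cum_mass N mu q (q i)} = q ` {i\<in>{1..N}. u \<le> cum_mass N mu q (q i)}"
    using assms by (intro image_cong) auto
  have "inv_into {1..N} p = inv_into {1..N} q"
    unfolding inv_into_def using assms by (intro ext arg_cong[where f=Eps]) auto
  then show ?thesis unfolding Gamma_eq_image S image by simp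
qed

lemma measurable_Gamma_section: "(\<lambda>u. Gamma N (u, p) mu) \<in> borel \<rightarrow>\<^sub>M count_space UNIV"
proof -
  define S where "S u = {i\<in>{1..N}. u \<le> cum_mass N mu p (p i)}" for u :: real
  have "S \<in> borel \<rightarrow>\<^sub>M count_space (Pow {1..N})"
    unfolding measurable_count_space_eq2[OF finite_Pow_iff[THEN iffD2, OF finite_atLeastAtMost]]
  proof (intro conjI ballI)
    show "S \<in> space borel \<rightarrow> Pow {1..N}" unfolding S_def by auto
    fix T assume "T \<in> Pow {1..N}"
    then have "S -` {T} = {u. \<forall>i\<in>{1..N}. u \<le> cum_mass N mu p (p i) \<longleftrightarrow> i \<in> T}"
      unfolding S_def by blast
    moreover have "{u. \<forall>i\<in>{1..N}. u \<le> cum_mass N mu p (p i) \<longleftrightarrow> i \<in> T} \<in> sets borel"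
      by measurable
    ultimately show "S -` {T} \<inter> space borel \<in> sets borel" by simp
  qed
  then show ?thesis
    unfolding Gamma_eq_image S_def[symmetric] by (rule measurable_compose) simp
qed

lemma measurable_fst_UPi: "fst \<in> UPi N \<rightarrow>\<^sub>M borel"
  unfolding UPi_def by (rule measurable_fst''[OF measurable_ident_sets]) simp

lemma measurable_snd_UPi: "snd \<in> UPi N \<rightarrow>\<^sub>M count_space UNIV"
  unfolding UPi_def by (rule measurable_snd[THEN measurable_compose]) simp

text \<open>The permutation factor carries the discrete \<open>\<sigma>\<close>-algebra on the uncountable type
  \<open>nat \<Rightarrow> nat\<close>; since \<open>Gamma\<close> only sees \<open>p\<close> on \<open>{1..N}\<close>, countably many sections suffice.\<close>

lemma measurable_Gamma: "(\<lambda>w. Gamma N w mu) \<in> UPi N \<rightarrow>\<^sub>M count_space UNIV"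
proof -
  have "(\<lambda>w. Gamma N (fst w, restrict (snd w) {1..N}) mu) \<in> UPi N \<rightarrow>\<^sub>M count_space UNIV"
  proof (rule measurable_compose_countable'[where f="\<lambda>q w. Gamma N (fst w, q) mu"
        and g="\<lambda>w. restrict (snd w) {1..N}" and I="{1..N} \<rightarrow>\<^sub>E UNIV"])
    show "(\<lambda>w. Gamma N (fst w, q) mu) \<in> UPi N \<rightarrow>\<^sub>M count_space UNIV" for q
      using measurable_fst_UPi measurable_Gamma_section by (rule measurable_compose)
    show "(\<lambda>w. restrict (snd w) {1..N}) \<in> UPi N \<rightarrow>\<^sub>M count_space ({1..N} \<rightarrow>\<^sub>E UNIV)"
      unfolding UPi_def by (rule measurable_compose[OF measurable_snd]) (simp del: restrict_apply)
    show "countable ({1..N} \<rightarrow>\<^sub>E (UNIV :: nat set))"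
      by (simp add: countable_PiE)
  qed
  moreover have "Gamma N (u, restrict p {1..N}) mu = Gamma N (u, p) mu" for u p
    by (rule Gamma_cong) simp
  ultimately show ?thesis by simp
qed

lemma finite_perms: "finite (perms N)"
  unfolding perms_def by (rule finite_permutations) simp

lemma perms_nonempty: "perms N \<noteq> {}"
  unfolding perms_def using permutes_id by blast

lemma prob_space_uniform_unit_interval: "prob_space (uniform_measure lborel {0..1::real})"
  by (rule prob_space_uniform_measure) simp_all

lemma pair_prob_space_UPi:
  "pair_prob_space (uniform_measure lborel {0..1::real}) (measure_pmf (pmf_of_set (perms N)))"
  by (simp add: pair_prob_space_def pair_sigma_finite_def prob_space_uniform_unit_interval
      prob_space_imp_sigma_finite prob_space_measure_pmf)

lemma prob_space_UPi: "prob_space (UPi N)"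
  unfolding UPi_def by (intro prob_space_pair prob_space_uniform_unit_interval prob_space_measure_pmf)

lemma space_UPi [simp]: "space (UPi N) = UNIV"
  unfolding UPi_def by (simp add: space_pair_measure)

lemma sets_Gamma_eq: "{w. Gamma N w mu = y} \<in> sets (UPi N)"
  using measurable_sets[OF measurable_Gamma, of "{y}"] by (simp add: vimage_def)

lemma AE_UPi:
  assumes "finite Z"
  shows "AE w in UPi N. fst w \<in> {0<..1} - Z \<and> snd w \<in> perms N"
proof -
  interpret pair_prob_space "uniform_measure lborel {0..1::real}" "measure_pmf (pmf_of_set (perms N))"
    by (rule pair_prob_space_UPi)
  define G where "G = {0<..1::real} - Z"
  have "G \<in> sets borel"
    unfolding G_def using sets.Diff[OF _ borel_closed[OF finite_imp_closed[OF assms]]] by simp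
  then have "G \<times> perms N \<in> sets (UPi N)"
    unfolding UPi_def by (intro pair_measureI) simp_all
  moreover have "{w \<in> space (UPi N). fst w \<in> G \<and> snd w \<in> perms N} = G \<times> perms N"
    by auto
  ultimately have sets: "{w \<in> space (UPi N). fst w \<in> G \<and> snd w \<in> perms N} \<in> sets (UPi N)"
    by simp
  have "AE u in lborel. \<forall>z\<in>insert 0 Z. u \<noteq> z"
    using assms by (intro AE_finite_allI) (simp_all add: AE_lborel_singleton)
  then have "AE u in lborel. u \<in> {0..1} \<longrightarrow> u \<in> G"
    unfolding G_def by eventually_elim auto
  then have "AE u in uniform_measure lborel {0..1}. u \<in> G"
    by (intro AE_uniform_measureI) simp_all
  moreover have "AE p in measure_pmf (pmf_of_set (perms N)). p \<in> perms N"
    using finite_perms perms_nonempty by (simp add: AE_measure_pmf_iff)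
  ultimately have "AE u in uniform_measure lborel {0..1}. AE p in measure_pmf (pmf_of_set (perms N)).
                      fst (u, p) \<in> G \<and> snd (u, p) \<in> perms N"
    by (auto elim!: eventually_mono)
  with sets show ?thesis
    unfolding G_def[symmetric] UPi_def by (rule AE_pair_measure)
qed

lemma integral_UPi:
  fixes g :: "real \<times> (nat \<Rightarrow> nat) \<Rightarrow> real"
  assumes "integrable (UPi N) g"
  shows "integral\<^sup>L (UPi N) g
           = (\<Sum>p\<in>perms N. \<integral>u. g (u, p) \<partial>uniform_measure lborel {0..1}) / card (perms N)"
proof -
  interpret pair_prob_space "uniform_measure lborel {0..1::real}" "measure_pmf (pmf_of_set (perms N))"
    by (rule pair_prob_space_UPi)
  have "integral\<^sup>L (UPi N) g
        = (\<integral>p. \<integral>u. g (u, p) \<partial>uniform_measure lborel {0..1} \<partial>measure_pmf (pmf_of_set (perms N)))"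
    using integral_snd[of "\<lambda>u p. g (u, p)"] assms by (simp add: UPi_def)
  then show ?thesis by (simp add: integral_pmf_of_set[OF perms_nonempty finite_perms])
qed

lemma uniform_measure_unit_interval:
  "uniform_measure lborel {0..1::real} = density lborel (\<lambda>x. ennreal (indicator {0..1} x))"
  unfolding uniform_measure_def by (simp add: ennreal_indicator divide_ennreal_def)

lemma Gamma_section_AE_eq:
  assumes p: "p permutes {1..N}" and mu: "is_distribution N mu" and y: "y \<in> {1..N}"
  shows "AE u in lborel. indicator {0..1} u * indicator {u. Gamma N (u, p) mu = y} u
           = (indicator {cum_mass N mu p (p y - 1) .. cum_mass N mu p (p y - 1) + mu y} u :: real)"
proof -
  define a where "a = cum_mass N mu p (p y - 1)"
  have "p y \<le> N" using permutes_in_image[OF p, of y] y by simp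
  then have ab: "0 \<le> a" "a + mu y \<le> 1"
    unfolding a_def cum_mass_step[OF p y, symmetric]
    using cum_mass_bounds[OF p mu, of "p y"] cum_mass_bounds[OF p mu, of "p y - 1"] by simp_all
  have "AE u in lborel. \<forall>z\<in>{0, a}. u \<noteq> z"
    by (rule AE_finite_allI) (simp_all add: AE_lborel_singleton)
  then show ?thesis
  proof eventually_elim
    case (elim u)
    show ?case
    proof (cases "0 < u \<and> u \<le> 1")
      case True
      then have "Gamma N (u, p) mu = y \<longleftrightarrow> a < u \<and> u \<le> a + mu y"
        unfolding a_def using Gamma_eq_iff[OF p mu _ _ y] by blast
      then show ?thesis using True elim by (simp add: a_def indicator_def)
    next
      case False
      then have "u \<notin> {0..1}" "u \<notin> {a..a + mu y}" using ab elim by auto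
      then show ?thesis by (simp add: a_def)
    qed
  qed
qed

lemma integral_Gamma_section:
  fixes f F :: "real \<Rightarrow> real"
  assumes p: "p permutes {1..N}" and mu: "is_distribution N mu" and y: "y \<in> {1..N}"
    and f: "continuous_on UNIV f" and F: "\<And>x. (F has_real_derivative f x) (at x)"
  shows "(\<integral>u. indicator {u. Gamma N (u, p) mu = y} u * f u \<partial>uniform_measure lborel {0..1})
           = F (cum_mass N mu p (p y - 1) + mu y) - F (cum_mass N mu p (p y - 1))"
proof -
  define a where "a = cum_mass N mu p (p y - 1)"
  define B where "B = {u. Gamma N (u, p) mu = y}"
  have B: "B \<in> sets borel"
    using measurable_sets[OF measurable_Gamma_section, of "{y}"] by (simp add: B_def vimage_def)
  have fm: "f \<in> borel_measurable borel"
    using f by (rule borel_measurable_continuous_onI)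
  have "(\<integral>u. indicator B u * f u \<partial>uniform_measure lborel {0..1})
          = (\<integral>u. indicator {0..1} u * indicator B u * f u \<partial>lborel)"
    unfolding uniform_measure_unit_interval using B fm by (subst integral_density) (simp_all add: mult.assoc)
  also have "\<dots> = (\<integral>u. indicator {a..a + mu y} u *\<^sub>R f u \<partial>lborel)"
    using B fm Gamma_section_AE_eq[OF p mu y]
    by (intro integral_cong_AE) (auto simp: B_def a_def elim!: eventually_mono)
  also have "\<dots> = F (a + mu y) - F a"
  proof (rule integral_FTC_atLeastAtMost)
    show "a \<le> a + mu y" using mu y by (simp add: is_distribution_def)
    show "(F has_vector_derivative f x) (at x within {a..a + mu y})" for x
      using F has_real_derivative_iff_has_vector_derivative has_vector_derivative_at_within by blast
    show "continuous_on {a..a + mu y} f" using f continuous_on_subset by blast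
  qed
  finally show ?thesis unfolding B_def a_def .
qed

lemma integrable_UPi:
  fixes f :: "real \<Rightarrow> real" and h :: "(nat \<Rightarrow> nat) \<Rightarrow> real"
  assumes A: "A \<in> sets (UPi N)" and f: "continuous_on UNIV f"
  shows "integrable (UPi N) (\<lambda>w. indicator A w * (f (fst w) * h (snd w)))"
proof -
  interpret prob_space "UPi N" by (rule prob_space_UPi)
  have "bounded (f ` {0..1})"
    using f by (intro compact_imp_bounded compact_continuous_image) (auto intro: continuous_on_subset)
  then obtain B where B: "\<And>u. u \<in> {0..1} \<Longrightarrow> \<bar>f u\<bar> \<le> B"
    unfolding bounded_iff by (metis imageI real_norm_def)
  have "AE w in UPi N. norm (indicator A w * (f (fst w) * h (snd w))) \<le> B * (\<Sum>p\<in>perms N. \<bar>h p\<bar>)"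
    using AE_UPi[OF finite.emptyI, of N]
  proof eventually_elim
    case (elim w)
    then have "\<bar>f (fst w)\<bar> \<le> B" "\<bar>h (snd w)\<bar> \<le> (\<Sum>p\<in>perms N. \<bar>h p\<bar>)"
      using B finite_perms by (auto intro: member_le_sum)
    then show ?case
      by (auto simp: indicator_def abs_mult intro: mult_mono)
  qed
  moreover have "(\<lambda>w. indicator A w * (f (fst w) * h (snd w))) \<in> borel_measurable (UPi N)"
    using A measurable_compose[OF measurable_fst_UPi borel_measurable_continuous_onI[OF f]]
      measurable_compose[OF measurable_snd_UPi, of h]
    by measurable
  ultimately show ?thesis by (rule integrable_const_bound)
qed

lemma integral_Gamma_eq:
  fixes f F :: "real \<Rightarrow> real" and h :: "(nat \<Rightarrow> nat) \<Rightarrow> real"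
  assumes mu: "is_distribution N mu" and y: "y \<in> {1..N}"
    and f: "continuous_on UNIV f" and F: "\<And>x. (F has_real_derivative f x) (at x)"
  shows "(\<integral>w. indicator {w. Gamma N w mu = y} w * (f (fst w) * h (snd w)) \<partial>UPi N)
           = (\<Sum>p\<in>perms N. (F (cum_mass N mu p (p y - 1) + mu y) - F (cum_mass N mu p (p y - 1))) * h p)
               / card (perms N)"
proof -
  define A where "A = {w. Gamma N w mu = y}"
  have "A \<in> sets (UPi N)"
    unfolding A_def by (rule sets_Gamma_eq)
  then have "(\<integral>w. indicator A w * (f (fst w) * h (snd w)) \<partial>UPi N)
      = (\<Sum>p\<in>perms N. \<integral>u. indicator A (u, p) * (f u * h p) \<partial>uniform_measure lborel {0..1})
          / card (perms N)"
    using integrable_UPi f by (simp add: integral_UPi)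
  also have "\<dots> = (\<Sum>p\<in>perms N. (F (cum_mass N mu p (p y - 1) + mu y) - F (cum_mass N mu p (p y - 1))) * h p)
                    / card (perms N)"
  proof (intro arg_cong2[where f="(/)"] sum.cong refl)
    fix p assume "p \<in> perms N"
    then have p: "p permutes {1..N}" by (simp add: perms_def)
    have "(\<lambda>u. indicator A (u, p) * (f u * h p))
          = (\<lambda>u. indicator {u. Gamma N (u, p) mu = y} u * f u * h p)"
      by (simp add: A_def indicator_def mult.assoc)
    then show "(\<integral>u. indicator A (u, p) * (f u * h p) \<partial>uniform_measure lborel {0..1})
          = (F (cum_mass N mu p (p y - 1) + mu y) - F (cum_mass N mu p (p y - 1))) * h p"
      by (simp only: integral_mult_left_zero integral_Gamma_section[OF p mu y f F])
  qed
  finally show ?thesis unfolding A_def .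
qed

lemma integral_Gamma_event:
  fixes h :: "(nat \<Rightarrow> nat) \<Rightarrow> real"
  assumes "is_distribution N mu" and "y \<in> {1..N}"
  shows "(\<integral>w. indicator {w. Gamma N w mu = y} w * h (snd w) \<partial>UPi N)
           = mu y * (\<Sum>p\<in>perms N. h p) / card (perms N)"
  using integral_Gamma_eq[OF assms continuous_on_const[of UNIV 1] DERIV_ident, where h=h]
  by (simp add: sum_distrib_left)

lemma integral_Gamma_event_fst:
  fixes h :: "(nat \<Rightarrow> nat) \<Rightarrow> real"
  assumes "is_distribution N mu" and "y \<in> {1..N}"
  shows "(\<integral>w. indicator {w. Gamma N w mu = y} w * (fst w * h (snd w)) \<partial>UPi N)
           = (\<Sum>p\<in>perms N. (mu y * cum_mass N mu p (p y - 1) + (mu y)\<^sup>2 / 2) * h p) / card (perms N)"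
proof -
  have "((\<lambda>u. u\<^sup>2 / 2) has_real_derivative x) (at x)" for x :: real
    by (auto intro!: derivative_eq_intros)
  moreover have "(s + m)\<^sup>2 / 2 - s\<^sup>2 / 2 = m * s + m\<^sup>2 / 2" for s m :: real
    by (simp add: power2_eq_square algebra_simps)
  ultimately show ?thesis
    using integral_Gamma_eq[OF assms continuous_on_id, of "\<lambda>u. u\<^sup>2 / 2" h] by simp
qed

lemma measure_Gamma_eq:
  assumes "is_distribution N mu" and "y \<in> {1..N}"
  shows "measure (UPi N) {w. Gamma N w mu = y} = mu y"
proof -
  have "measure (UPi N) {w. Gamma N w mu = y} = (\<integral>w. indicator {w. Gamma N w mu = y} w * 1 \<partial>UPi N)"
    using sets_Gamma_eq prob_space_UPi[THEN prob_space.finite_measure, THEN finite_measure.emeasure_finite]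
    by simp
  also have "\<dots> = mu y"
    using integral_Gamma_event[OF assms, of "\<lambda>_. 1"] finite_perms perms_nonempty by simp
  finally show ?thesis .
qed

lemma sum_perms_compose_transpose:
  assumes "i \<in> {1..N}" "j \<in> {1..N}"
  shows "(\<Sum>p\<in>perms N. g (p \<circ> Transposition.transpose i j)) = (\<Sum>p\<in>perms N. g p)"
  unfolding perms_def by (rule sum_permutations_compose_right[OF permutes_swap_id[OF assms], symmetric])

lemma sum_perms_apply:
  fixes \<phi> :: "nat \<Rightarrow> real"
  assumes y: "y \<in> {1..N}"
  shows "(\<Sum>p\<in>perms N. \<phi> (p y)) / card (perms N) = (\<Sum>k\<in>{1..N}. \<phi> k) / N"
proof -
  have "real N * (\<Sum>p\<in>perms N. \<phi> (p y)) = (\<Sum>z\<in>{1..N}. \<Sum>p\<in>perms N. \<phi> (p z))"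
    using sum_perms_compose_transpose[OF y, of _ "\<lambda>p. \<phi> (p y)"] by simp
  also have "\<dots> = (\<Sum>p\<in>perms N. \<Sum>z\<in>{1..N}. \<phi> (p z))"
    by (rule sum.swap)
  also have "\<dots> = (\<Sum>p\<in>perms N. \<Sum>k\<in>{1..N}. \<phi> k)"
  proof (rule sum.cong[OF refl])
    fix p assume "p \<in> perms N"
    then show "(\<Sum>z\<in>{1..N}. \<phi> (p z)) = (\<Sum>k\<in>{1..N}. \<phi> k)"
      using sum.permute[of p "{1..N}" \<phi>] by (simp add: perms_def comp_def)
  qed
  finally show ?thesis
    using y finite_perms perms_nonempty by (simp add: field_simps card_gt_0_iff)
qed

lemma card_rank_less:
  assumes p: "p permutes {1..N}" and y: "y \<in> {1..N}"
  shows "card {j\<in>{1..N}. p j < p y} = p y - 1"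
proof -
  have "p y \<le> N" using permutes_in_image[OF p, of y] y by simp
  have "p ` {j\<in>{1..N}. p j < p y} = {k \<in> p ` {1..N}. k < p y}"
    by blast
  also have "\<dots> = {1..<p y}"
    unfolding permutes_image[OF p] using \<open>p y \<le> N\<close> by auto
  finally have "card {j\<in>{1..N}. p j < p y} = card {1..<p y}"
    using permutes_inj_on[OF p] by (metis (no_types, lifting) card_image inj_on_subset mem_Collect_eq subsetI)
  then show ?thesis by simp
qed

lemma sum_perms_rank_less:
  fixes \<phi> :: "nat \<Rightarrow> real"
  assumes N: "N \<ge> 2" and y: "y \<in> {1..N}" and j: "j \<in> {1..N} - {y}"
  shows "(\<Sum>p\<in>perms N. \<phi> (p y) * of_bool (p j < p y)) = (\<Sum>p\<in>perms N. \<phi> (p y) * eta N (p y))"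
proof -
  define R where "R = {1..N} - {y}"
  define Q where "Q j = (\<Sum>p\<in>perms N. \<phi> (p y) * of_bool (p j < p y))" for j
  txt \<open>A transposition of \<open>j\<close> and \<open>j'\<close> fixes \<open>y\<close>, so \<open>Q\<close> is constant on \<open>R\<close>; summed over
    \<open>R\<close>, it counts the \<open>p y - 1\<close> points ranked below \<open>y\<close>.\<close>
  have Q_eq: "Q j' = Q j" if "j' \<in> R" for j'
  proof -
    have "Transposition.transpose j j' y = y" using j that by (auto simp: R_def)
    then show ?thesis unfolding Q_def
      using sum_perms_compose_transpose[of j N j' "\<lambda>p. \<phi> (p y) * of_bool (p j' < p y)"] j that
      by (simp add: R_def)
  qed
  have "card R = N - 1" using y by (simp add: R_def)
  then have "real (N - 1) * Q j = (\<Sum>j'\<in>R. Q j')"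
    using Q_eq by simp
  also have "\<dots> = (\<Sum>p\<in>perms N. \<phi> (p y) * card (R \<inter> {j'. p j' < p y}))"
    unfolding Q_def R_def
    by (subst sum.swap) (simp add: sum_distrib_left[symmetric] sum.If_cases of_bool_def)
  also have "\<dots> = real (N - 1) * (\<Sum>p\<in>perms N. \<phi> (p y) * eta N (p y))"
    unfolding sum_distrib_left
  proof (rule sum.cong[OF refl])
    fix p assume "p \<in> perms N"
    then have p: "p permutes {1..N}" by (simp add: perms_def)
    have "R \<inter> {j'. p j' < p y} = {j'\<in>{1..N}. p j' < p y}" by (auto simp: R_def)
    then have "card (R \<inter> {j'. p j' < p y}) = p y - 1" using card_rank_less[OF p y] by simp
    moreover have "p y \<ge> 1" using permutes_in_image[OF p, of y] y by simp
    ultimately show "\<phi> (p y) * card (R \<inter> {j'. p j' < p y}) = real (N - 1) * (\<phi> (p y) * eta N (p y))"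
      using N unfolding eta_def by (simp add: of_nat_diff)
  qed
  finally show ?thesis using N by (simp add: Q_def)
qed

lemma sum_perms_cum_mass:
  fixes \<phi> :: "nat \<Rightarrow> real"
  assumes N: "N \<ge> 2" and mu: "is_distribution N mu" and y: "y \<in> {1..N}"
  shows "(\<Sum>p\<in>perms N. \<phi> (p y) * cum_mass N mu p (p y - 1))
           = (1 - mu y) * (\<Sum>p\<in>perms N. \<phi> (p y) * eta N (p y))"
proof -
  have "(\<Sum>p\<in>perms N. \<phi> (p y) * cum_mass N mu p (p y - 1))
          = (\<Sum>p\<in>perms N. \<Sum>j\<in>{1..N} - {y}. mu j * (\<phi> (p y) * of_bool (p j < p y)))"
  proof (rule sum.cong[OF refl])
    fix p assume "p \<in> perms N"
    then have p: "p permutes {1..N}" by (simp add: perms_def)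
    show "\<phi> (p y) * cum_mass N mu p (p y - 1)
            = (\<Sum>j\<in>{1..N} - {y}. mu j * (\<phi> (p y) * of_bool (p j < p y)))"
      unfolding cum_mass_pred_eq_sum[OF p y] sum_distrib_left by (simp only: mult_ac)
  qed
  also have "\<dots> = (\<Sum>j\<in>{1..N} - {y}. mu j * (\<Sum>p\<in>perms N. \<phi> (p y) * of_bool (p j < p y)))"
    by (subst sum.swap) (simp add: sum_distrib_left)
  also have "\<dots> = (\<Sum>j\<in>{1..N} - {y}. mu j) * (\<Sum>p\<in>perms N. \<phi> (p y) * eta N (p y))"
    using sum_perms_rank_less[OF N y] by (simp add: sum_distrib_right)
  also have "(\<Sum>j\<in>{1..N} - {y}. mu j) = 1 - mu y"
    using mu y unfolding is_distribution_def by (simp add: sum_diff1)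
  finally show ?thesis .
qed

lemma C0_eq_moments:
  assumes "N \<ge> 1"
  shows "C0 N = (\<Sum>k\<in>{1..N}. eta N k ^ 2) / N - ((\<Sum>k\<in>{1..N}. eta N k) / N)\<^sup>2"
proof -
  have "finite (set_pmf (pmf_of_set {1..N}))" using assms by simp
  then show ?thesis
    unfolding C0_def using assms
    by (subst measure_pmf.variance_eq) (simp_all add: integrable_measure_pmf_finite integral_pmf_of_set)
qed

lemma C0_pos:
  assumes "N \<ge> 2"
  shows "C0 N > 0"
proof -
  define E where "E = (\<Sum>k\<in>{1..N}. eta N k) / N"
  have C0: "C0 N = (\<Sum>k\<in>{1..N}. (eta N k - E)\<^sup>2) / N"
    unfolding C0_def E_def using assms by (simp add: integral_pmf_of_set)
  have "eta N 1 = 0" "eta N N = 1" using assms by (simp_all add: eta_def)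
  then have "eta N 1 \<noteq> E \<or> eta N N \<noteq> E" by auto
  moreover have "1 \<in> {1..N}" "N \<in> {1..N}" using assms by auto
  ultimately obtain k where "k \<in> {1..N}" "eta N k \<noteq> E" by blast
  then have "(\<Sum>k\<in>{1..N}. (eta N k - E)\<^sup>2) > 0"
    by (intro sum_pos2[of _ k]) auto
  then show ?thesis unfolding C0 using assms by simp
qed

lemma C0_eq_perms:
  assumes "y \<in> {1..N}"
  shows "C0 N = (\<Sum>p\<in>perms N. eta N (p y) ^ 2) / card (perms N)
                  - ((\<Sum>p\<in>perms N. eta N (p y)) / card (perms N))\<^sup>2"
  using C0_eq_moments[of N] sum_perms_apply[OF assms, of "\<lambda>k. eta N k ^ 2"]
    sum_perms_apply[OF assms, of "eta N"] assms
  by simp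

lemma cond_cov_Gamma:
  assumes N: "N \<ge> 2" and mu: "is_distribution N mu" and y: "y \<in> {1..N}" and pos: "mu y > 0"
  shows "cond_cov (UPi N) (\<lambda>w. fst w) (\<lambda>w. eta N (snd w (Gamma N w mu))) (\<lambda>w. Gamma N w mu) y
           = (1 - mu y) * C0 N"
proof -
  define m where "m = mu y"
  define n where "n = real (card (perms N))"
  define A where "A = {w. Gamma N w mu = y}"
  define a where "a p = cum_mass N mu p (p y - 1)" for p
  define e where "e p = eta N (p y)" for p :: "nat \<Rightarrow> nat"
  have n: "n > 0" unfolding n_def using finite_perms perms_nonempty by (simp add: card_gt_0_iff)
  have on_A: "indicator A w * eta N (snd w (Gamma N w mu)) = indicator A w * e (snd w)"
    "indicator A w * (u * eta N (snd w (Gamma N w mu))) = indicator A w * (u * e (snd w))"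
    for w and u :: real
    by (simp_all add: A_def e_def indicator_def)
  have P: "measure (UPi N) A = m"
    unfolding A_def m_def using measure_Gamma_eq[OF mu y] .
  have EU: "(\<integral>w. indicator A w * fst w \<partial>UPi N) = (m * (\<Sum>p\<in>perms N. a p) + m\<^sup>2 / 2 * n) / n"
    using integral_Gamma_event_fst[OF mu y, of "\<lambda>_. 1"]
    by (simp add: A_def a_def m_def n_def sum.distrib sum_distrib_left)
  have EE: "(\<integral>w. indicator A w * eta N (snd w (Gamma N w mu)) \<partial>UPi N) = m * (\<Sum>p\<in>perms N. e p) / n"
    unfolding on_A using integral_Gamma_event[OF mu y, of e] by (simp add: A_def m_def n_def)
  have EUE: "(\<integral>w. indicator A w * (fst w * eta N (snd w (Gamma N w mu))) \<partial>UPi N)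
               = (m * (\<Sum>p\<in>perms N. e p * a p) + m\<^sup>2 / 2 * (\<Sum>p\<in>perms N. e p)) / n"
    unfolding on_A using integral_Gamma_event_fst[OF mu y, of e]
    by (simp add: A_def a_def m_def n_def sum.distrib sum_distrib_left sum_distrib_right algebra_simps)
  have Sa: "(\<Sum>p\<in>perms N. a p) = (1 - m) * (\<Sum>p\<in>perms N. e p)"
    using sum_perms_cum_mass[OF N mu y, of "\<lambda>_. 1"] by (simp add: a_def e_def m_def)
  have Sea: "(\<Sum>p\<in>perms N. e p * a p) = (1 - m) * (\<Sum>p\<in>perms N. e p * e p)"
    using sum_perms_cum_mass[OF N mu y, of "eta N"] by (simp add: a_def e_def m_def)
  have C0: "C0 N = (\<Sum>p\<in>perms N. e p * e p) / n - ((\<Sum>p\<in>perms N. e p) / n)\<^sup>2"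
    using C0_eq_perms[OF y] by (simp add: e_def n_def power2_eq_square)
  have event: "{w \<in> space (UPi N). Gamma N w mu = y} = A" by (simp add: A_def)
  have "cond_cov (UPi N) (\<lambda>w. fst w) (\<lambda>w. eta N (snd w (Gamma N w mu))) (\<lambda>w. Gamma N w mu) y
          = (\<Sum>p\<in>perms N. e p * a p) / n - (\<Sum>p\<in>perms N. a p) / n * ((\<Sum>p\<in>perms N. e p) / n)"
    unfolding cond_cov_def Let_def cond_exp_event_def event P EU EE EUE
    using pos n by (simp add: field_simps power2_eq_square m_def)
  also have "\<dots> = (1 - m) * C0 N"
    unfolding Sa Sea C0 by (simp add: field_simps power2_eq_square)
  finally show ?thesis unfolding m_def .
qed

theorem lemma9:
  fixes N :: nat and mu :: "nat \<Rightarrow> real"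
  assumes "N \<ge> 2"
    and "is_distribution N mu"
  shows "AE w in UPi N.
           (1 / C0 N) * cond_cov (UPi N) (\<lambda>w. fst w) (\<lambda>w. eta N (snd w (Gamma N w mu)))
                           (\<lambda>w. Gamma N w mu) (Gamma N w mu)
           = 1 - mu (Gamma N w mu)"
proof -
  have "AE w in UPi N. fst w \<in> {0<..1} - sum mu ` Pow {1..N} \<and> snd w \<in> perms N"
    by (rule AE_UPi) simp
  then show ?thesis
  proof eventually_elim
    case (elim w)
    then obtain u p where w: "w = (u, p)" and p: "p permutes {1..N}"
      and u: "0 < u" "u \<le> 1" "u \<notin> sum mu ` Pow {1..N}"
      by (cases w) (auto simp: perms_def)
    have "Gamma N w mu \<in> {1..N}" "mu (Gamma N w mu) > 0"
      unfolding w using Gamma_in_atLeastAtMost[OF p assms(2) u(2)] mass_Gamma_pos[OF p assms(2) u] .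
    then show ?case
      using cond_cov_Gamma[OF assms] C0_pos[OF assms(1)] by simp
  qed
qed

end
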